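(* Consider a Levin–Wen string-net model built from a multiplicity-free fusion category with label set $\mathcal{F}$ in which every label is self-dual ($\bar a=a$) and which has an $S$-matrix $S$. Let $a\in\mathcal{F}$ with $a\neq 1$, let $e$ be an edge of the trivalent lattice, and let $p$ be either of the two plaquettes adjacent to $e$, with Levin–Wen plaquette operator $B_p$. Then for every $|\psi\rangle\in\mathcal{H}_{\mathrm{valid}}$ with $B_p|\psi\rangle=|\psi\rangle$, one has $B_p\big(O_a^{(e)}|\psi\rangle\big)=0$.
   Context: Each edge of a trivalent (e.g. honeycomb) lattice carries a qudit with orthonormal basis $\{|b\rangle\}_{b\in\mathcal{F}}$. The fusion category has fusion rules $\delta_{abc}\in\{0,1\}$, quantum dimensions $d_s>0$, total quantum dimension $D=\sqrt{\sum_j d_j^2}$, and unitary symmetric $S$-matrix. The vertex projector $A_v$ projects onto configurations where the three labels $(a,b,c)$ at vertex $v$ satisfy $\delta_{abc}=1$; $\mathcal{H}_{\mathrm{valid}}=\mathrm{span}\{|\psi\rangle: A_v|\psi\rangle=|\psi\rangle\ \forall v\}$. The plaquette operator is the standard Levin–Wen operator $B_p=\sum_{s\in\mathcal{F}}\frac{d_s}{D^2}B_p^s$, where $B_p^s$ (defined on $\mathcal{H}_{\mathrm{valid}}$ via the $F$-symbols) inserts a loop of type $s$ inside plaquette $p$ and fuses it into the boundary edges. The single-qudit operator $O_a^{(e)}$ acts on the qudit at edge $e$ by $O_a|b\rangle=\frac{S_{ab}}{S_{1b}}|b\rangle$ for all $b\in\mathcal{F}$, and as identity elsewhere. *)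

theory Defs
  imports Complex_Main
begin

text \<open>Fusion rules N a b c stand for
  delta_{abc} in {0,1}. Since every label is self-dual, delta is symmetric in all three
  arguments and delta_{1ab} = [a = b].\<close>

definition fusion_rules :: "'l::finite \<Rightarrow> ('l \<Rightarrow> 'l \<Rightarrow> 'l \<Rightarrow> bool) \<Rightarrow> bool" where
  "fusion_rules one N \<longleftrightarrow>
     (\<forall>a b c. N a b c = N b a c \<and> N a b c = N a c b) \<and>
     (\<forall>a b. N one a b \<longleftrightarrow> a = b) \<and>
     (\<forall>a b c d. (\<Sum>x\<in>UNIV. (if N a b x \<and> N x c d then 1 else 0 :: nat))
              = (\<Sum>x\<in>UNIV. (if N b c x \<and> N a x d then 1 else 0 :: nat)))"

definition quantum_dims :: "'l::finite \<Rightarrow> ('l \<Rightarrow> 'l \<Rightarrow> 'l \<Rightarrow> bool) \<Rightarrow> ('l \<Rightarrow> real) \<Rightarrow> bool" where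
  "quantum_dims one N d \<longleftrightarrow>
     (\<forall>a. d a > 0) \<and> d one = 1 \<and>
     (\<forall>a b. d a * d b = (\<Sum>c\<in>{c. N a b c}. d c))"

definition totalD :: "('l::finite \<Rightarrow> real) \<Rightarrow> real" where
  "totalD d = sqrt (\<Sum>j\<in>UNIV. (d j)\<^sup>2)"

text \<open>F-symbols in the Levin-Wen convention: F i j m k l n stands for F^{ijm}_{kln}
  (i,j fuse to m; k,l fuse to m*; after the move l,i fuse to n* and j,k to n).
  Stars are dropped since all labels are self-dual.  v_i = sqrt d_i.
  Axioms: normalization, tetrahedral symmetry, pentagon (Levin-Wen eqs. (3)-(5)),
  and unitarity of each F-move.\<close>

definition F_symbols :: "'l::finite \<Rightarrow> ('l \<Rightarrow> 'l \<Rightarrow> 'l \<Rightarrow> bool) \<Rightarrow> ('l \<Rightarrow> real)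
      \<Rightarrow> ('l \<Rightarrow> 'l \<Rightarrow> 'l \<Rightarrow> 'l \<Rightarrow> 'l \<Rightarrow> 'l \<Rightarrow> complex) \<Rightarrow> bool" where
  "F_symbols one N d F \<longleftrightarrow>
     (let v = (\<lambda>i. complex_of_real (sqrt (d i))) in
     (\<forall>i j m k l n. F i j m k l n \<noteq> 0 \<longrightarrow> N i j m \<and> N k l m \<and> N l i n \<and> N j k n) \<and>
     (\<forall>i j k. F i j k j i one = (if N i j k then v k / (v i * v j) else 0)) \<and>
     (\<forall>i j m k l n.
        F i j m k l n = F l k m j i n \<and>
        F i j m k l n = F j i m l k n \<and>
        F i j m k l n = F i m j k n l * (v m * v n) / (v j * v l)) \<and>
     (\<forall>m l q k p j i s r.
        (\<Sum>n\<in>UNIV. F m l q k p n * F j i p m n s * F j s n l k r)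
          = F j i p q k r * F r i q m l s) \<and>
     (\<forall>i j k l m m'. N i j m \<and> N k l m \<and> N i j m' \<and> N k l m' \<longrightarrow>
        (\<Sum>n\<in>UNIV. F i j m k l n * cnj (F i j m' k l n)) = (if m = m' then 1 else 0)) \<and>
     (\<forall>i j k l n n'. N l i n \<and> N j k n \<and> N l i n' \<and> N j k n' \<longrightarrow>
        (\<Sum>m\<in>UNIV. cnj (F i j m k l n) * F i j m k l n') = (if n = n' then 1 else 0)))"

definition fusion_category :: "'l::finite \<Rightarrow> ('l \<Rightarrow> 'l \<Rightarrow> 'l \<Rightarrow> bool) \<Rightarrow> ('l \<Rightarrow> real)
      \<Rightarrow> ('l \<Rightarrow> 'l \<Rightarrow> 'l \<Rightarrow> 'l \<Rightarrow> 'l \<Rightarrow> 'l \<Rightarrow> complex) \<Rightarrow> bool" where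
  "fusion_category one N d F \<longleftrightarrow> fusion_rules one N \<and> quantum_dims one N d \<and> F_symbols one N d F"

definition S_matrix :: "'l::finite \<Rightarrow> ('l \<Rightarrow> real) \<Rightarrow> ('l \<Rightarrow> 'l \<Rightarrow> complex) \<Rightarrow> bool" where
  "S_matrix one d S \<longleftrightarrow>
     (\<forall>a b. S a b = S b a) \<and>
     (\<forall>a c. (\<Sum>b\<in>UNIV. S a b * cnj (S c b)) = (if a = c then 1 else 0)) \<and>
     (\<forall>b. S one b = complex_of_real (d b / totalD d))"

definition trivalent_lattice :: "('v::finite \<Rightarrow> 'e::finite set) \<Rightarrow> bool" where
  "trivalent_lattice inc \<longleftrightarrow> (\<forall>v. card (inc v) = 3) \<and> (\<forall>e. card {v. e \<in> inc v} = 2)"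

type_synonym ('e, 'l) state = "('e \<Rightarrow> 'l) \<Rightarrow> complex"

definition vertex_ok :: "('l \<Rightarrow> 'l \<Rightarrow> 'l \<Rightarrow> bool) \<Rightarrow> ('v \<Rightarrow> 'e set) \<Rightarrow> 'v \<Rightarrow> ('e \<Rightarrow> 'l) \<Rightarrow> bool" where
  "vertex_ok N inc v \<sigma> \<longleftrightarrow>
     (\<forall>e1 e2 e3. inc v = {e1, e2, e3} \<and> distinct [e1, e2, e3] \<longrightarrow> N (\<sigma> e1) (\<sigma> e2) (\<sigma> e3))"

definition A_v :: "('l \<Rightarrow> 'l \<Rightarrow> 'l \<Rightarrow> bool) \<Rightarrow> ('v \<Rightarrow> 'e set) \<Rightarrow> 'v \<Rightarrow> ('e, 'l) state \<Rightarrow> ('e, 'l) state" where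
  "A_v N inc v \<psi> = (\<lambda>\<sigma>. if vertex_ok N inc v \<sigma> then \<psi> \<sigma> else 0)"

definition H_valid :: "('l \<Rightarrow> 'l \<Rightarrow> 'l \<Rightarrow> bool) \<Rightarrow> ('v \<Rightarrow> 'e set) \<Rightarrow> ('e, 'l) state set" where
  "H_valid N inc = {\<psi>. \<forall>v. A_v N inc v \<psi> = \<psi>}"

text \<open>A plaquette with n boundary edges bs ! 0 .. bs ! (n-1) (in cyclic order), corners
  vs ! k joining bs ! (k-1 mod n) and bs ! k, and external legs xs ! k at vs ! k.\<close>
definition prv :: "nat \<Rightarrow> nat \<Rightarrow> nat" where
  "prv n k = (k + n - 1) mod n"

definition is_plaquette :: "('v \<Rightarrow> 'e set) \<Rightarrow> 'e list \<Rightarrow> 'e list \<Rightarrow> 'v list \<Rightarrow> bool" where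
  "is_plaquette inc bs xs vs \<longleftrightarrow>
     bs \<noteq> [] \<and> length xs = length bs \<and> length vs = length bs \<and>
     distinct bs \<and> distinct vs \<and> set xs \<inter> set bs = {} \<and>
     (\<forall>k < length bs. inc (vs ! k) = {bs ! prv (length bs) k, bs ! k, xs ! k})"

definition B_s :: "('l \<Rightarrow> 'l \<Rightarrow> 'l \<Rightarrow> 'l \<Rightarrow> 'l \<Rightarrow> 'l \<Rightarrow> complex) \<Rightarrow> 'e list \<Rightarrow> 'e list
      \<Rightarrow> 'l \<Rightarrow> ('e::finite, 'l::finite) state \<Rightarrow> ('e, 'l) state" where
  "B_s F bs xs s \<psi> = (\<lambda>\<sigma>'. \<Sum>\<sigma>\<in>UNIV.
      (if (\<forall>x. x \<notin> set bs \<longrightarrow> \<sigma>' x = \<sigma> x)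
       then (\<Prod>k<length bs. F (\<sigma> (xs ! k)) (\<sigma> (bs ! k)) (\<sigma> (bs ! prv (length bs) k))
                               s (\<sigma>' (bs ! prv (length bs) k)) (\<sigma>' (bs ! k)))
       else 0) * \<psi> \<sigma>)"

definition B_p :: "('l \<Rightarrow> real) \<Rightarrow> ('l \<Rightarrow> 'l \<Rightarrow> 'l \<Rightarrow> 'l \<Rightarrow> 'l \<Rightarrow> 'l \<Rightarrow> complex) \<Rightarrow> 'e list
      \<Rightarrow> 'e list \<Rightarrow> ('e::finite, 'l::finite) state \<Rightarrow> ('e, 'l) state" where
  "B_p d F bs xs \<psi> = (\<lambda>\<sigma>. \<Sum>s\<in>UNIV. complex_of_real (d s / (totalD d)\<^sup>2) * B_s F bs xs s \<psi> \<sigma>)"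

definition O_op :: "('l \<Rightarrow> 'l \<Rightarrow> complex) \<Rightarrow> 'l \<Rightarrow> 'l \<Rightarrow> 'e \<Rightarrow> ('e, 'l) state \<Rightarrow> ('e, 'l) state" where
  "O_op S one a e \<psi> = (\<lambda>\<sigma>. S a (\<sigma> e) / S one (\<sigma> e) * \<psi> \<sigma>)"

end

theory Submission
  imports Defs "HOL-Library.FuncSet"
begin

text \<open>Write B_p as the sum of the loop operators B_p^s with weights d_s / D^2. In the product
  of two loop operators s and t with the label of the edge e between them fixed to b, the
  pentagon equation resolves every corner of the plaquette into an intermediate label, and
  orthogonality of F-moves forces these labels to agree around the plaquette except at e, where
  a bubble remains; weighted by d_s d_t the bubble sums to d_b^2 times the weight of a single
  loop. Hence B_p P_b B_p = (d_b^2 / D^2) B_p for the projector P_b onto label b at e, so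
  B_p O_a B_p is B_p times the sum of S_ab / S_1b * d_b^2 / D^2 = S_ab S_1b^*, which vanishes
  by unitarity of S since a is not the unit.\<close>

section \<open>Identities of F-symbols\<close>

definition sqrt_dim :: "('l \<Rightarrow> real) \<Rightarrow> 'l \<Rightarrow> complex" where
  "sqrt_dim d i = complex_of_real (sqrt (d i))"

locale fusion_cat =
  fixes one :: "'l::finite" and N :: "'l \<Rightarrow> 'l \<Rightarrow> 'l \<Rightarrow> bool" and d :: "'l \<Rightarrow> real"
    and F :: "'l \<Rightarrow> 'l \<Rightarrow> 'l \<Rightarrow> 'l \<Rightarrow> 'l \<Rightarrow> 'l \<Rightarrow> complex"
  assumes fusion_category: "fusion_category one N d F"
begin

abbreviation "v \<equiv> sqrt_dim d"
abbreviation "cd a \<equiv> complex_of_real (d a)"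

lemma N_swap12: "N a b c = N b a c"
  using fusion_category unfolding fusion_category_def fusion_rules_def by blast

lemma N_swap23: "N a b c = N a c b"
  using fusion_category unfolding fusion_category_def fusion_rules_def by blast

lemma N_rotate: "N a b c = N c a b"
  using N_swap12 N_swap23 by metis

lemma N_swap13: "N a b c = N c b a"
  using N_swap12 N_swap23 by metis

lemma N_one_left: "N one a b \<longleftrightarrow> a = b"
  using fusion_category unfolding fusion_category_def fusion_rules_def by blast

lemma N_one_mid: "N a one b \<longleftrightarrow> a = b"
  using N_one_left N_swap12 by metis

lemma d_pos: "d a > 0"
  using fusion_category unfolding fusion_category_def quantum_dims_def by blast

lemma d_one: "d one = 1"
  using fusion_category unfolding fusion_category_def quantum_dims_def by blast

lemma d_mult: "d a * d b = (\<Sum>c\<in>{c. N a b c}. d c)"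
  using fusion_category unfolding fusion_category_def quantum_dims_def by blast

lemma sqrt_dim_nonzero: "v a \<noteq> 0"
  using d_pos[of a] by (simp add: sqrt_dim_def)

lemma sqrt_dim_one: "v one = 1"
  by (simp add: sqrt_dim_def d_one)

lemma sqrt_dim_square: "v a * v a = cd a"
  using d_pos[of a] by (simp add: sqrt_dim_def flip: of_real_mult)

lemma F_axioms:
  "(\<forall>i j m k l n. F i j m k l n \<noteq> 0 \<longrightarrow> N i j m \<and> N k l m \<and> N l i n \<and> N j k n) \<and>
   (\<forall>i j k. F i j k j i one = (if N i j k then v k / (v i * v j) else 0)) \<and>
   (\<forall>i j m k l n. F i j m k l n = F l k m j i n \<and> F i j m k l n = F j i m l k n \<and>
      F i j m k l n = F i m j k n l * (v m * v n) / (v j * v l)) \<and>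
   (\<forall>m l q k p j i s r. (\<Sum>n\<in>UNIV. F m l q k p n * F j i p m n s * F j s n l k r)
      = F j i p q k r * F r i q m l s)"
  using fusion_category unfolding fusion_category_def F_symbols_def Let_def sqrt_dim_def
  by (elim conjE) (intro conjI; assumption)

lemma F_admissible: "F i j m k l n \<noteq> 0 \<Longrightarrow> N i j m \<and> N k l m \<and> N l i n \<and> N j k n"
  using F_axioms[THEN conjunct1] by blast

lemma F_unit_normalization: "F i j k j i one = (if N i j k then v k / (v i * v j) else 0)"
  using F_axioms[THEN conjunct2, THEN conjunct1] by blast

lemma F_reflect: "F i j m k l n = F l k m j i n"
  using F_axioms[THEN conjunct2, THEN conjunct2, THEN conjunct1] by blast

lemma F_swap: "F i j m k l n = F j i m l k n"
  using F_axioms[THEN conjunct2, THEN conjunct2, THEN conjunct1] by blast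

lemma F_rotate: "F i j m k l n = F i m j k n l * (v m * v n) / (v j * v l)"
  using F_axioms[THEN conjunct2, THEN conjunct2, THEN conjunct1] by blast

lemma F_pentagon: "(\<Sum>n\<in>UNIV. F m l q k p n * F j i p m n s * F j s n l k r)
    = F j i p q k r * F r i q m l s"
  using F_axioms[THEN conjunct2, THEN conjunct2, THEN conjunct2] by blast

lemma F_unit_corner: "F c e a a one c = (if N c a e then 1 else 0)"
proof -
  have "F c e a a one c = F c a e a c one * (v a * v c) / (v e * v one)"
    by (rule F_rotate)
  also have "\<dots> = (if N c a e then 1 else 0)"
    using sqrt_dim_nonzero[of a] sqrt_dim_nonzero[of c] sqrt_dim_nonzero[of e]
    by (simp add: F_unit_normalization sqrt_dim_one field_simps)
  finally show ?thesis .
qed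

lemma F_unit_second: "F j one p q k r = (if p = j \<and> q = r \<and> N r j k then 1 else 0)"
proof -
  have diag: "F j one j r k r = (if N r j k then 1 else 0)"
    using F_swap[of j one j r k r] F_reflect[of one j j k r r] F_unit_corner[of r k j] by simp
  show ?thesis
  proof (cases "F j one p q k r = 0")
    case False
    from F_admissible[OF False] have "N j one p" "N one q r"
      by auto
    then have "p = j" "q = r"
      using N_one_left N_one_mid by auto
    then show ?thesis
      using diag by simp
  qed (use diag in auto)
qed

text \<open>The pentagon equation with one label set to the unit yields the orthogonality of
  F-moves without appeal to unitarity.\<close>

lemma F_orthogonality:
  "(\<Sum>n\<in>UNIV. F s l q k j n * F j s n l k r) = (if q = r \<and> N r j k \<and> N s r l then 1 else 0)"
proof -
  have insert_unit: "F s l q k j n * F j s n l k r = F s l q k j n * F j one j s n s * F j s n l k r"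
    for n
    using F_admissible[of j s n l k r] by (auto simp: F_unit_second N_swap12[of j s n])
  have "(\<Sum>n\<in>UNIV. F s l q k j n * F j s n l k r)
      = (\<Sum>n\<in>UNIV. F s l q k j n * F j one j s n s * F j s n l k r)"
    by (rule sum.cong[OF refl insert_unit])
  also have "\<dots> = F j one j q k r * F r one q s l s"
    by (rule F_pentagon)
  finally show ?thesis
    by (simp add: F_unit_second)
qed

lemma F_bubble_orthogonality:
  "(\<Sum>b\<in>UNIV. F b0 b2 u s t b * F b2 s b t b0 u') = (if u = u' \<and> N s t u \<and> N b0 b2 u then 1 else 0)"
proof -
  have "F b2 s b t b0 u' = F t b0 b b2 s u'" for b
    using F_swap[of b2 s b t b0 u'] F_reflect[of s b2 b b0 t u'] by simp
  then have "(\<Sum>b\<in>UNIV. F b0 b2 u s t b * F b2 s b t b0 u')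
      = (if u = u' \<and> N u' t s \<and> N b0 u' b2 then 1 else 0)"
    by (simp add: F_orthogonality)
  moreover have "N u' t s = N s t u'" "N b0 u' b2 = N b0 b2 u'"
    using N_swap13 N_swap23 by blast+
  ultimately show ?thesis
    by auto
qed

lemma F_corner_pentagon:
  "F x b0 a0 t a b * F x b a s a2 b2 = (\<Sum>u\<in>UNIV. F a2 s a t a0 u * F x b0 a0 u a2 b2 * F b0 b2 u s t b)"
  using F_pentagon[of a2 s a t a0 b0 x b2 b] F_swap[of b0 x] F_swap[of b x] by simp

text \<open>Tetrahedral symmetry turns the bubble into a product whose sum over s is an instance of
  F_orthogonality.\<close>

lemma F_bubble_term_rotate:
  "cd s * cd t * (F c c2 u s t b * F c2 s b t c u)
     = cd t * cd u * cd b / cd c * (F u c2 c b t s * F t u s c2 b c)"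
proof -
  have nz: "v b \<noteq> 0" "v c \<noteq> 0" "v s \<noteq> 0" "v t \<noteq> 0" "v u \<noteq> 0" "v c2 \<noteq> 0"
    by (simp_all add: sqrt_dim_nonzero)
  have first: "F c2 s b t c u = F c c2 u s t b"
  proof -
    have "F c2 s b t c u = F s b c2 c u t * (v b * v u) / (v c2 * v t)"
      by (metis F_rotate F_swap)
    also have "F s b c2 c u t = F c c2 u s t b * (v c2 * v t) / (v u * v b)"
      by (metis F_reflect F_rotate F_swap)
    finally show ?thesis
      using nz by (simp add: field_simps)
  qed
  have second: "F c c2 u s t b = F u c2 c b t s * (v u * v b) / (v c * v s)"
    by (metis F_rotate F_swap)
  have third: "F t u s c2 b c = F u c2 c b t s"
  proof -
    have "F t u s c2 b c = F b s c2 u c t * (v s * v c) / (v c2 * v t)"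
      by (metis F_reflect F_rotate)
    also have "F b s c2 u c t = F u c2 c b t s * (v c2 * v t) / (v c * v s)"
      by (metis F_reflect F_rotate F_swap)
    finally show ?thesis
      using nz by (simp add: field_simps)
  qed
  have "F c c2 u s t b * F c2 s b t c u
      = F u c2 c b t s * F u c2 c b t s * ((v u * v u) * (v b * v b)) / ((v c * v c) * (v s * v s))"
    by (simp add: first second field_simps)
  also have "\<dots> = F u c2 c b t s * F t u s c2 b c * (cd u * cd b) / (cd c * cd s)"
    by (simp only: sqrt_dim_square third)
  finally show ?thesis
    using d_pos[of c] d_pos[of s] by (simp add: field_simps)
qed

lemma sum_fusion_dims: "(\<Sum>t\<in>UNIV. if N a b t then cd t else 0) = cd a * cd b"
proof -
  have "(\<Sum>t\<in>UNIV. if N a b t then cd t else 0) = complex_of_real (\<Sum>t\<in>{t. N a b t}. d t)"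
    by (simp add: sum.If_cases of_real_sum)
  also have "\<dots> = complex_of_real (d a * d b)"
    by (simp only: d_mult)
  finally show ?thesis
    by simp
qed

lemma dim_weighted_bubble_sum:
  assumes "N c c2 u"
  shows "(\<Sum>s\<in>UNIV. \<Sum>t\<in>UNIV. cd s * cd t * (F c c2 u s t b * F c2 s b t c u)) = cd b * cd b * cd u"
proof -
  have "N u c c2"
    using assms N_rotate by metis
  have "(\<Sum>s\<in>UNIV. \<Sum>t\<in>UNIV. cd s * cd t * (F c c2 u s t b * F c2 s b t c u))
      = (\<Sum>t\<in>UNIV. cd t * cd u * cd b / cd c * (\<Sum>s\<in>UNIV. F u c2 c b t s * F t u s c2 b c))"
    by (subst sum.swap) (simp add: F_bubble_term_rotate sum_distrib_left)
  also have "\<dots> = cd u * cd b / cd c * (\<Sum>t\<in>UNIV. if N c b t then cd t else 0)"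
    using \<open>N u c c2\<close> by (auto simp: F_orthogonality sum_distrib_left N_swap23[of c _ b] intro!: sum.cong)
  also have "\<dots> = cd b * cd b * cd u"
    using d_pos[of c] by (simp add: sum_fusion_dims)
  finally show ?thesis .
qed

end

section \<open>Sums over label assignments\<close>

lemma prv_less: "0 < n \<Longrightarrow> prv n k < n"
  by (simp add: prv_def)

lemma prv_Suc_mod: "k < n \<Longrightarrow> prv n (Suc k mod n) = k"
  by (cases "Suc k < n") (auto simp: prv_def mod_if)

lemma Suc_prv_mod: "k < n \<Longrightarrow> Suc (prv n k) mod n = k"
  by (cases k) (auto simp: prv_def mod_if)

lemma cyclic_chain_const:
  fixes U :: "nat \<Rightarrow> 'a"
  assumes j: "j < n" and step: "\<And>k. k < n \<Longrightarrow> k \<noteq> j \<Longrightarrow> U k = U (Suc k mod n)"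
    and k: "k < n"
  shows "U k = U j"
proof -
  have from_succ: "U ((j + 1 + i) mod n) = U ((j + 1) mod n)" if "i < n" for i
    using that
  proof (induction i)
    case (Suc i)
    have "(j + 1 + i) mod n \<noteq> j"
    proof
      assume "(j + 1 + i) mod n = j"
      moreover have "j + 1 + i < n + n"
        using Suc.prems j by simp
      ultimately show False
        using Suc.prems by (cases "j + 1 + i < n") (auto simp: mod_if split: if_splits)
    qed
    then have "U ((j + 1 + i) mod n) = U (Suc ((j + 1 + i) mod n) mod n)"
      using step j by simp
    also have "Suc ((j + 1 + i) mod n) mod n = (j + 1 + Suc i) mod n"
      by (simp add: mod_Suc_eq)
    finally show ?case
      using Suc by simp
  qed simp
  define i where "i = (if j < k then k - j - 1 else k + n - j - 1)"
  have "i < n" "(j + 1 + i) mod n = k"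
    using j k by (auto simp: i_def)
  have "(j + 1 + (n - 1)) mod n = j"
    using j by simp
  then have "U j = U ((j + 1) mod n)"
    using from_succ[of "n - 1"] j by simp
  also have "\<dots> = U ((j + 1 + i) mod n)"
    using from_succ[OF \<open>i < n\<close>] by simp
  finally show ?thesis
    using \<open>(j + 1 + i) mod n = k\<close> by simp
qed

lemma sum_PiE_fixed_coord_prod:
  fixes f :: "nat \<Rightarrow> 'a::finite \<Rightarrow> 'b::comm_semiring_1"
  assumes "j < n"
  shows "(\<Sum>\<beta>\<in>PiE {..<n} (\<lambda>_. UNIV). if \<beta> j = b then \<Prod>k<n. f k (\<beta> k) else 0)
       = (\<Prod>k<n. if k = j then f j b else \<Sum>c\<in>UNIV. f k c)"
proof -
  define h where "h k c = (if k = j then if c = b then f k c else 0 else f k c)" for k c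
  have "(if \<beta> j = b then \<Prod>k<n. f k (\<beta> k) else 0) = (\<Prod>k<n. h k (\<beta> k))" for \<beta>
  proof (cases "\<beta> j = b")
    case False
    then have "h j (\<beta> j) = 0"
      by (simp add: h_def)
    then have "(\<Prod>k<n. h k (\<beta> k)) = 0"
      using assms by (intro prod_zero) auto
    with False show ?thesis
      by simp
  qed (auto simp: h_def intro: prod.cong)
  then have "(\<Sum>\<beta>\<in>PiE {..<n} (\<lambda>_. UNIV). if \<beta> j = b then \<Prod>k<n. f k (\<beta> k) else 0)
      = (\<Prod>k<n. \<Sum>c\<in>UNIV. h k c)"
    by (simp add: prod_sum_PiE)
  also have "\<dots> = (\<Prod>k<n. if k = j then f j b else \<Sum>c\<in>UNIV. f k c)"
    by (rule prod.cong) (simp_all add: h_def)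
  finally show ?thesis .
qed

lemma sum_PiE_cyclic_const:
  fixes \<Phi> :: "(nat \<Rightarrow> 'a::finite) \<Rightarrow> 'b::comm_monoid_add"
  assumes j: "j < n"
    and vanish: "\<And>U k. U \<in> PiE {..<n} (\<lambda>_. UNIV) \<Longrightarrow> \<Phi> U \<noteq> 0 \<Longrightarrow> k < n \<Longrightarrow> k \<noteq> j
        \<Longrightarrow> U k = U (Suc k mod n)"
  shows "(\<Sum>U\<in>PiE {..<n} (\<lambda>_. UNIV). \<Phi> U) = (\<Sum>w\<in>UNIV. \<Phi> (\<lambda>k\<in>{..<n}. w))"
proof -
  define const where "const w = (\<lambda>k\<in>{..<n}. w)" for w :: 'a
  have const_PiE: "range const \<subseteq> PiE {..<n} (\<lambda>_. UNIV)"
    by (simp add: const_def image_subset_iff)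
  have "\<Phi> U = 0" if U: "U \<in> PiE {..<n} (\<lambda>_. UNIV)" "U \<notin> range const" for U
  proof (rule ccontr)
    assume "\<Phi> U \<noteq> 0"
    then have step: "U k = U (Suc k mod n)" if "k < n" "k \<noteq> j" for k
      using vanish U(1) that by blast
    have "U k = const (U j) k" for k
    proof (cases "k < n")
      case True
      then show ?thesis
        using cyclic_chain_const[where U = U, OF j step True] by (simp add: const_def)
    qed (simp add: const_def PiE_arb[OF U(1)])
    then show False
      using U(2) by (metis ext rangeI)
  qed
  then have "(\<Sum>U\<in>PiE {..<n} (\<lambda>_. UNIV). \<Phi> U) = (\<Sum>U\<in>range const. \<Phi> U)"
    by (intro sum.mono_neutral_right const_PiE) (auto intro: finite_PiE)
  also have "\<dots> = (\<Sum>w\<in>UNIV. \<Phi> (const w))"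
  proof (rule sum.reindex[unfolded comp_def])
    show "inj const"
    proof (rule injI)
      fix w w'
      assume "const w = const w'"
      then have "const w j = const w' j"
        by simp
      with j show "w = w'"
        by (simp add: const_def)
    qed
  qed
  finally show ?thesis
    by (simp add: const_def)
qed

lemma sum_agreeing_off_list:
  fixes bs :: "'e::finite list" and \<sigma>0 :: "'e \<Rightarrow> 'l::finite"
    and g :: "(nat \<Rightarrow> 'l) \<Rightarrow> 'b::comm_monoid_add"
  assumes "distinct bs"
  shows "(\<Sum>\<sigma>\<in>{\<sigma>. \<forall>y. y \<notin> set bs \<longrightarrow> \<sigma> y = \<sigma>0 y}. g (\<lambda>k\<in>{..<length bs}. \<sigma> (bs ! k)))
       = (\<Sum>\<beta>\<in>PiE {..<length bs} (\<lambda>_. UNIV). g \<beta>)"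
proof -
  define pos where "pos = the_inv_into {..<length bs} ((!) bs)"
  define rebuild where "rebuild \<beta> y = (if y \<in> set bs then \<beta> (pos y) else \<sigma>0 y)" for \<beta> y
  have inj: "inj_on ((!) bs) {..<length bs}"
    using assms by (simp add: inj_on_nth)
  have img: "(!) bs ` {..<length bs} = set bs"
    by (auto simp: in_set_conv_nth)
  have pos_less: "pos y < length bs" if "y \<in> set bs" for y
    using the_inv_into_into[OF inj, of y "{..<length bs}"] img that by (auto simp: pos_def)
  have nth_pos: "bs ! pos y = y" if "y \<in> set bs" for y
    using f_the_inv_into_f[OF inj, of y] img that by (simp add: pos_def)
  have pos_nth: "pos (bs ! k) = k" if "k < length bs" for k
    using the_inv_into_f_f[OF inj, of k] that by (simp add: pos_def)
  show ?thesis
  proof (rule sum.reindex_bij_witness[where i = rebuild and j = "\<lambda>\<sigma>. \<lambda>k\<in>{..<length bs}. \<sigma> (bs ! k)"])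
    fix \<sigma>
    assume "\<sigma> \<in> {\<sigma>. \<forall>y. y \<notin> set bs \<longrightarrow> \<sigma> y = \<sigma>0 y}"
    then have off: "\<sigma> y = \<sigma>0 y" if "y \<notin> set bs" for y
      using that by simp
    show "rebuild (\<lambda>k\<in>{..<length bs}. \<sigma> (bs ! k)) = \<sigma>"
      by (intro ext) (simp add: rebuild_def pos_less nth_pos off)
  next
    fix \<beta> :: "nat \<Rightarrow> 'l"
    assume "\<beta> \<in> PiE {..<length bs} (\<lambda>_. UNIV)"
    then show "(\<lambda>k\<in>{..<length bs}. rebuild \<beta> (bs ! k)) = \<beta>"
      by (intro ext) (simp add: rebuild_def pos_nth PiE_arb[of \<beta>])
  qed (simp_all add: rebuild_def)
qed

section \<open>Two loops around a plaquette\<close>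

text \<open>The matrix element of B_p^s from boundary labels \<beta> to \<beta>' of an n-gon with external
  legs x, in coordinates indexed by the position along the boundary.\<close>

definition loop_amplitude :: "('l \<Rightarrow> 'l \<Rightarrow> 'l \<Rightarrow> 'l \<Rightarrow> 'l \<Rightarrow> 'l \<Rightarrow> complex) \<Rightarrow> nat \<Rightarrow> (nat \<Rightarrow> 'l)
      \<Rightarrow> 'l \<Rightarrow> (nat \<Rightarrow> 'l) \<Rightarrow> (nat \<Rightarrow> 'l) \<Rightarrow> complex" where
  "loop_amplitude F n x s \<beta> \<beta>' = (\<Prod>k<n. F (x k) (\<beta> k) (\<beta> (prv n k)) s (\<beta>' (prv n k)) (\<beta>' k))"

context fusion_cat
begin

text \<open>Each corner of the two stacked loops is resolved by the pentagon equation, creating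
  one intermediate label U k per corner.\<close>

lemma two_loops_expand:
  assumes "0 < n"
  shows "loop_amplitude F n x s \<beta> b2 * loop_amplitude F n x t b0 \<beta>
    = (\<Sum>U\<in>PiE {..<n} (\<lambda>_. UNIV). (\<Prod>k<n. F (x k) (b0 k) (b0 (prv n k)) (U k) (b2 (prv n k)) (b2 k)) *
        (\<Prod>k<n. F (b0 k) (b2 k) (U k) s t (\<beta> k) * F (b2 k) s (\<beta> k) t (b0 k) (U (Suc k mod n))))"
proof -
  define p where "p = prv n"
  define L where "L i u c = F (b2 i) s c t (b0 i) u" for i u c
  define K where "K k u = F (x k) (b0 k) (b0 (p k)) u (b2 (p k)) (b2 k)" for k u
  define R where "R k u c = F (b0 k) (b2 k) u s t c" for k u c
  have shift: "(\<Prod>k<n. L (p k) (U k) (\<beta> (p k))) = (\<Prod>k<n. L k (U (Suc k mod n)) (\<beta> k))" for U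
    by (rule prod.reindex_bij_witness[of _ "\<lambda>k. Suc k mod n" p])
      (auto simp: p_def prv_Suc_mod Suc_prv_mod prv_less assms)
  have "loop_amplitude F n x s \<beta> b2 * loop_amplitude F n x t b0 \<beta>
      = (\<Prod>k<n. F (x k) (b0 k) (b0 (p k)) t (\<beta> (p k)) (\<beta> k) * F (x k) (\<beta> k) (\<beta> (p k)) s (b2 (p k)) (b2 k))"
    by (simp add: loop_amplitude_def p_def prod.distrib mult.commute)
  also have "\<dots> = (\<Prod>k<n. \<Sum>u\<in>UNIV. L (p k) u (\<beta> (p k)) * K k u * R k u (\<beta> k))"
    by (simp add: F_corner_pentagon L_def K_def R_def)
  also have "\<dots> = (\<Sum>U\<in>PiE {..<n} (\<lambda>_. UNIV). \<Prod>k<n. L (p k) (U k) (\<beta> (p k)) * K k (U k) * R k (U k) (\<beta> k))"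
    by (rule prod_sum_PiE) auto
  also have "\<dots> = (\<Sum>U\<in>PiE {..<n} (\<lambda>_. UNIV). (\<Prod>k<n. K k (U k)) *
      (\<Prod>k<n. R k (U k) (\<beta> k) * L k (U (Suc k mod n)) (\<beta> k)))"
    by (simp add: prod.distrib shift mult_ac)
  finally show ?thesis
    by (simp add: K_def R_def L_def p_def)
qed

text \<open>Summing over the boundary labels, orthogonality forces all intermediate labels to agree;
  only at the fixed edge j a bubble survives.\<close>

lemma two_loops_fixed_edge:
  assumes j: "j < n"
  shows "(\<Sum>\<beta>\<in>PiE {..<n} (\<lambda>_. UNIV).
            if \<beta> j = b then loop_amplitude F n x s \<beta> b2 * loop_amplitude F n x t b0 \<beta> else 0)
    = (\<Sum>w\<in>UNIV. loop_amplitude F n x w b0 b2 * (F (b0 j) (b2 j) w s t b * F (b2 j) s b t (b0 j) w))"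
proof -
  define K where "K U = (\<Prod>k<n. F (x k) (b0 k) (b0 (prv n k)) (U k) (b2 (prv n k)) (b2 k))" for U
  define G where "G U k c = F (b0 k) (b2 k) (U k) s t c * F (b2 k) s c t (b0 k) (U (Suc k mod n))"
    for U k c
  define T where "T U k = (if k = j then G U j b
      else if U k = U (Suc k mod n) \<and> N s t (U k) \<and> N (b0 k) (b2 k) (U k) then 1 else 0)" for U k
  have G_sum: "(\<Sum>c\<in>UNIV. G U k c) = (if U k = U (Suc k mod n) \<and> N s t (U k) \<and> N (b0 k) (b2 k) (U k)
      then 1 else 0)" for U k
    by (simp add: G_def F_bubble_orthogonality)
  have "(\<Sum>\<beta>\<in>PiE {..<n} (\<lambda>_. UNIV).
            if \<beta> j = b then loop_amplitude F n x s \<beta> b2 * loop_amplitude F n x t b0 \<beta> else 0)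
      = (\<Sum>\<beta>\<in>PiE {..<n} (\<lambda>_. UNIV). \<Sum>U\<in>PiE {..<n} (\<lambda>_. UNIV).
            K U * (if \<beta> j = b then \<Prod>k<n. G U k (\<beta> k) else 0))"
    using two_loops_expand[of n] j by (intro sum.cong refl) (simp add: K_def G_def sum_distrib_left)
  also have "\<dots> = (\<Sum>U\<in>PiE {..<n} (\<lambda>_. UNIV). K U * (\<Prod>k<n. if k = j then G U j b else \<Sum>c\<in>UNIV. G U k c))"
    by (subst sum.swap) (simp add: sum_distrib_left[symmetric] sum_PiE_fixed_coord_prod[OF j])
  also have "\<dots> = (\<Sum>U\<in>PiE {..<n} (\<lambda>_. UNIV). K U * (\<Prod>k<n. T U k))"
    unfolding G_sum T_def ..
  also have "\<dots> = (\<Sum>w\<in>UNIV. K (\<lambda>k\<in>{..<n}. w) * (\<Prod>k<n. T (\<lambda>k\<in>{..<n}. w) k))"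
  proof (rule sum_PiE_cyclic_const[OF j])
    fix U k
    assume "K U * (\<Prod>k<n. T U k) \<noteq> 0" "k < n" "k \<noteq> j"
    then have "T U k \<noteq> 0"
      by (auto simp: prod_zero_iff)
    with \<open>k \<noteq> j\<close> show "U k = U (Suc k mod n)"
      by (simp add: T_def split: if_splits)
  qed
  also have "\<dots> = (\<Sum>w\<in>UNIV. loop_amplitude F n x w b0 b2 * G (\<lambda>k\<in>{..<n}. w) j b)"
  proof (rule sum.cong[OF refl])
    fix w :: 'l
    define U where "U = (\<lambda>k\<in>{..<n}. w)"
    have K_U: "K U = loop_amplitude F n x w b0 b2"
      unfolding K_def U_def loop_amplitude_def using j by (intro prod.cong) (simp_all add: prv_less)
    have T_U: "(\<Prod>k<n. T U k) = G U j b"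
      if amp: "loop_amplitude F n x w b0 b2 \<noteq> 0" and G: "G U j b \<noteq> 0"
    proof -
      have "N (b0 k) (b2 k) w" if "k < n" for k
      proof -
        have "F (x k) (b0 k) (b0 (prv n k)) w (b2 (prv n k)) (b2 k) \<noteq> 0"
          using amp that by (simp add: loop_amplitude_def prod_zero_iff)
        then show ?thesis
          using F_admissible N_swap23 by blast
      qed
      moreover have "F (b0 j) (b2 j) w s t b \<noteq> 0"
        using G j by (simp add: G_def U_def)
      then have "N s t w"
        using F_admissible by blast
      ultimately have "T U k = 1" if "k < n" "k \<noteq> j" for k
        using that j by (simp add: T_def U_def)
      then show ?thesis
        using j by (simp add: prod.remove[of "{..<n}" j] T_def)
    qed
    have "T U j = G U j b"
      by (simp add: T_def)
    then show "K U * (\<Prod>k<n. T U k) = loop_amplitude F n x w b0 b2 * G U j b"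
      using T_U j by (cases "G U j b = 0") (auto simp: K_U prod_zero_iff)
  qed
  finally show ?thesis
    using j by (simp add: G_def lessThan_iff)
qed

lemma dim_weighted_two_loops:
  assumes j: "j < n"
  shows "(\<Sum>s\<in>UNIV. \<Sum>t\<in>UNIV. cd s * cd t * (\<Sum>\<beta>\<in>PiE {..<n} (\<lambda>_. UNIV).
            if \<beta> j = b then loop_amplitude F n x s \<beta> b2 * loop_amplitude F n x t b0 \<beta> else 0))
    = cd b * cd b * (\<Sum>w\<in>UNIV. cd w * loop_amplitude F n x w b0 b2)"
proof -
  define A where "A w = loop_amplitude F n x w b0 b2" for w
  define B where "B s t w = cd s * cd t * (F (b0 j) (b2 j) w s t b * F (b2 j) s b t (b0 j) w)" for s t w
  have "(\<Sum>s\<in>UNIV. \<Sum>t\<in>UNIV. cd s * cd t * (\<Sum>\<beta>\<in>PiE {..<n} (\<lambda>_. UNIV).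
            if \<beta> j = b then loop_amplitude F n x s \<beta> b2 * loop_amplitude F n x t b0 \<beta> else 0))
      = (\<Sum>s\<in>UNIV. \<Sum>t\<in>UNIV. \<Sum>w\<in>UNIV. A w * B s t w)"
    by (simp add: two_loops_fixed_edge[OF j] A_def B_def sum_distrib_left mult_ac)
  also have "\<dots> = (\<Sum>s\<in>UNIV. \<Sum>w\<in>UNIV. \<Sum>t\<in>UNIV. A w * B s t w)"
    by (rule sum.cong[OF refl], rule sum.swap)
  also have "\<dots> = (\<Sum>w\<in>UNIV. A w * (\<Sum>s\<in>UNIV. \<Sum>t\<in>UNIV. B s t w))"
    by (subst sum.swap) (simp add: sum_distrib_left)
  also have "\<dots> = (\<Sum>w\<in>UNIV. A w * (cd b * cd b * cd w))"
  proof (rule sum.cong[OF refl])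
    fix w
    show "A w * (\<Sum>s\<in>UNIV. \<Sum>t\<in>UNIV. B s t w) = A w * (cd b * cd b * cd w)"
    proof (cases "A w = 0")
      case False
      then have "F (x j) (b0 j) (b0 (prv n j)) w (b2 (prv n j)) (b2 j) \<noteq> 0"
        using j by (simp add: A_def loop_amplitude_def prod_zero_iff)
      then have "N (b0 j) (b2 j) w"
        using F_admissible N_swap23 by blast
      then show ?thesis
        by (simp add: B_def dim_weighted_bubble_sum)
    qed simp
  qed
  finally show ?thesis
    by (simp add: A_def sum_distrib_left mult_ac)
qed

end

section \<open>Plaquette operators as kernels on configurations\<close>

lemma loop_amplitude_cong:
  assumes "\<And>k. k < n \<Longrightarrow> x k = x' k" "\<And>k. k < n \<Longrightarrow> \<beta> k = \<gamma> k" "\<And>k. k < n \<Longrightarrow> \<beta>' k = \<gamma>' k"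
  shows "loop_amplitude F n x s \<beta> \<beta>' = loop_amplitude F n x' s \<gamma> \<gamma>'"
  unfolding loop_amplitude_def using assms by (intro prod.cong) (simp_all add: prv_less)

definition loop_kernel :: "('l \<Rightarrow> 'l \<Rightarrow> 'l \<Rightarrow> 'l \<Rightarrow> 'l \<Rightarrow> 'l \<Rightarrow> complex) \<Rightarrow> 'e list \<Rightarrow> 'e list
      \<Rightarrow> 'l \<Rightarrow> ('e \<Rightarrow> 'l) \<Rightarrow> ('e \<Rightarrow> 'l) \<Rightarrow> complex" where
  "loop_kernel F bs xs s \<sigma>' \<sigma> =
     (if \<forall>y. y \<notin> set bs \<longrightarrow> \<sigma>' y = \<sigma> y
      then loop_amplitude F (length bs) (\<lambda>k. \<sigma> (xs ! k)) s (\<lambda>k. \<sigma> (bs ! k)) (\<lambda>k. \<sigma>' (bs ! k))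
      else 0)"

lemma B_s_eq_loop_kernel: "B_s F bs xs s \<psi> \<sigma>' = (\<Sum>\<sigma>\<in>UNIV. loop_kernel F bs xs s \<sigma>' \<sigma> * \<psi> \<sigma>)"
  unfolding B_s_def loop_kernel_def loop_amplitude_def by simp

definition plaquette_kernel :: "('l::finite \<Rightarrow> real) \<Rightarrow> ('l \<Rightarrow> 'l \<Rightarrow> 'l \<Rightarrow> 'l \<Rightarrow> 'l \<Rightarrow> 'l \<Rightarrow> complex)
      \<Rightarrow> 'e list \<Rightarrow> 'e list \<Rightarrow> ('e \<Rightarrow> 'l) \<Rightarrow> ('e \<Rightarrow> 'l) \<Rightarrow> complex" where
  "plaquette_kernel d F bs xs \<sigma>' \<sigma> =
     (\<Sum>s\<in>UNIV. complex_of_real (d s / (totalD d)\<^sup>2) * loop_kernel F bs xs s \<sigma>' \<sigma>)"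

lemma B_p_eq_plaquette_kernel:
  "B_p d F bs xs \<psi> \<sigma>' = (\<Sum>\<sigma>\<in>UNIV. plaquette_kernel d F bs xs \<sigma>' \<sigma> * \<psi> \<sigma>)"
proof -
  have "B_p d F bs xs \<psi> \<sigma>' = (\<Sum>s\<in>UNIV. \<Sum>\<sigma>\<in>UNIV.
      complex_of_real (d s / (totalD d)\<^sup>2) * loop_kernel F bs xs s \<sigma>' \<sigma> * \<psi> \<sigma>)"
    by (simp add: B_p_def B_s_eq_loop_kernel sum_distrib_left mult.assoc)
  also have "\<dots> = (\<Sum>\<sigma>\<in>UNIV. \<Sum>s\<in>UNIV.
      complex_of_real (d s / (totalD d)\<^sup>2) * loop_kernel F bs xs s \<sigma>' \<sigma> * \<psi> \<sigma>)"
    by (rule sum.swap)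
  finally show ?thesis
    by (simp add: plaquette_kernel_def sum_distrib_right)
qed

lemma sum_loop_kernel_pair_fixed_edge:
  fixes bs xs :: "'e::finite list" and \<sigma>'' \<sigma>0 :: "'e \<Rightarrow> 'l::finite"
  assumes bs: "distinct bs" "length xs = length bs" "set xs \<inter> set bs = {}"
    and j: "j < length bs" and agree: "\<forall>y. y \<notin> set bs \<longrightarrow> \<sigma>'' y = \<sigma>0 y"
  shows "(\<Sum>\<sigma>\<in>UNIV. if \<sigma> (bs ! j) = b then loop_kernel F bs xs s \<sigma>'' \<sigma> * loop_kernel F bs xs t \<sigma> \<sigma>0 else 0)
    = (\<Sum>\<beta>\<in>PiE {..<length bs} (\<lambda>_. UNIV). if \<beta> j = b then
        loop_amplitude F (length bs) (\<lambda>k. \<sigma>0 (xs ! k)) s \<beta> (\<lambda>k. \<sigma>'' (bs ! k)) *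
        loop_amplitude F (length bs) (\<lambda>k. \<sigma>0 (xs ! k)) t (\<lambda>k. \<sigma>0 (bs ! k)) \<beta> else 0)"
    (is "_ = (\<Sum>\<beta>\<in>_. ?g \<beta>)")
proof -
  define S0 where "S0 = {\<sigma>. \<forall>y. y \<notin> set bs \<longrightarrow> \<sigma> y = \<sigma>0 y}"
  have "(\<Sum>\<sigma>\<in>UNIV. if \<sigma> (bs ! j) = b then loop_kernel F bs xs s \<sigma>'' \<sigma> * loop_kernel F bs xs t \<sigma> \<sigma>0 else 0)
      = (\<Sum>\<sigma>\<in>S0. if \<sigma> (bs ! j) = b then loop_kernel F bs xs s \<sigma>'' \<sigma> * loop_kernel F bs xs t \<sigma> \<sigma>0 else 0)"
    by (rule sum.mono_neutral_right) (simp_all add: S0_def loop_kernel_def, blast)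
  also have "\<dots> = (\<Sum>\<sigma>\<in>S0. ?g (\<lambda>k\<in>{..<length bs}. \<sigma> (bs ! k)))"
  proof (rule sum.cong[OF refl])
    fix \<sigma>
    assume "\<sigma> \<in> S0"
    then have "\<forall>y. y \<notin> set bs \<longrightarrow> \<sigma>'' y = \<sigma> y" "\<forall>y. y \<notin> set bs \<longrightarrow> \<sigma> y = \<sigma>0 y"
      using agree by (auto simp: S0_def)
    moreover have "\<sigma> (xs ! k) = \<sigma>0 (xs ! k)" if "k < length bs" for k
      using \<open>\<sigma> \<in> S0\<close> that bs by (auto simp: S0_def disjoint_iff)
    ultimately show "(if \<sigma> (bs ! j) = b then loop_kernel F bs xs s \<sigma>'' \<sigma> * loop_kernel F bs xs t \<sigma> \<sigma>0 else 0)
        = ?g (\<lambda>k\<in>{..<length bs}. \<sigma> (bs ! k))"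
      using j unfolding loop_kernel_def by (simp cong: loop_amplitude_cong)
  qed
  also have "\<dots> = (\<Sum>\<beta>\<in>PiE {..<length bs} (\<lambda>_. UNIV). ?g \<beta>)"
    unfolding S0_def by (rule sum_agreeing_off_list[OF bs(1)])
  finally show ?thesis .
qed

lemma sum_kernel_composition_by_label:
  fixes K L :: "('e::finite \<Rightarrow> 'l::finite) \<Rightarrow> ('e \<Rightarrow> 'l) \<Rightarrow> complex"
  shows "(\<Sum>\<sigma>\<in>UNIV. K \<sigma>'' \<sigma> * (g (\<sigma> e) * (\<Sum>\<sigma>0\<in>UNIV. L \<sigma> \<sigma>0 * \<psi> \<sigma>0)))
    = (\<Sum>\<sigma>0\<in>UNIV. (\<Sum>b\<in>UNIV. g b * (\<Sum>\<sigma>\<in>UNIV. if \<sigma> e = b then K \<sigma>'' \<sigma> * L \<sigma> \<sigma>0 else 0)) * \<psi> \<sigma>0)"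
proof -
  have "(\<Sum>\<sigma>\<in>UNIV. K \<sigma>'' \<sigma> * (g (\<sigma> e) * (\<Sum>\<sigma>0\<in>UNIV. L \<sigma> \<sigma>0 * \<psi> \<sigma>0)))
      = (\<Sum>\<sigma>\<in>UNIV. \<Sum>\<sigma>0\<in>UNIV. \<Sum>b\<in>UNIV. if \<sigma> e = b then g b * (K \<sigma>'' \<sigma> * L \<sigma> \<sigma>0) * \<psi> \<sigma>0 else 0)"
    by (simp add: sum_distrib_left mult_ac)
  also have "\<dots> = (\<Sum>\<sigma>0\<in>UNIV. \<Sum>\<sigma>\<in>UNIV. \<Sum>b\<in>UNIV. if \<sigma> e = b then g b * (K \<sigma>'' \<sigma> * L \<sigma> \<sigma>0) * \<psi> \<sigma>0 else 0)"
    by (rule sum.swap)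
  also have "\<dots> = (\<Sum>\<sigma>0\<in>UNIV. \<Sum>b\<in>UNIV. \<Sum>\<sigma>\<in>UNIV. if \<sigma> e = b then g b * (K \<sigma>'' \<sigma> * L \<sigma> \<sigma>0) * \<psi> \<sigma>0 else 0)"
    by (rule sum.cong[OF refl], rule sum.swap)
  also have "\<dots> = (\<Sum>\<sigma>0\<in>UNIV. (\<Sum>b\<in>UNIV. g b * (\<Sum>\<sigma>\<in>UNIV. if \<sigma> e = b then K \<sigma>'' \<sigma> * L \<sigma> \<sigma>0 else 0)) * \<psi> \<sigma>0)"
    by (auto simp: sum_distrib_left sum_distrib_right intro!: sum.cong)
  finally show ?thesis .
qed

context fusion_cat
begin

lemma dim_weighted_loop_kernels:
  fixes bs xs :: "'e::finite list"
  assumes bs: "distinct bs" "length xs = length bs" "set xs \<inter> set bs = {}" and j: "j < length bs"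
  shows "(\<Sum>s\<in>UNIV. \<Sum>t\<in>UNIV. cd s * cd t *
            (\<Sum>\<sigma>\<in>UNIV. if \<sigma> (bs ! j) = b then loop_kernel F bs xs s \<sigma>'' \<sigma> * loop_kernel F bs xs t \<sigma> \<sigma>0 else 0))
     = cd b * cd b * (\<Sum>w\<in>UNIV. cd w * loop_kernel F bs xs w \<sigma>'' \<sigma>0)"
proof (cases "\<forall>y. y \<notin> set bs \<longrightarrow> \<sigma>'' y = \<sigma>0 y")
  case True
  then show ?thesis
    by (simp add: sum_loop_kernel_pair_fixed_edge[OF bs j True] dim_weighted_two_loops[OF j])
      (simp add: loop_kernel_def True)
next
  case False
  then have "(if \<sigma> (bs ! j) = b then loop_kernel F bs xs s \<sigma>'' \<sigma> * loop_kernel F bs xs t \<sigma> \<sigma>0 else 0) = 0"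
    for s t \<sigma>
    unfolding loop_kernel_def by auto
  moreover have "loop_kernel F bs xs w \<sigma>'' \<sigma>0 = 0" for w
    using False unfolding loop_kernel_def by auto
  ultimately show ?thesis
    by simp
qed

lemma plaquette_kernel_edge_projection:
  fixes bs xs :: "'e::finite list"
  assumes bs: "distinct bs" "length xs = length bs" "set xs \<inter> set bs = {}" and j: "j < length bs"
  shows "(\<Sum>\<sigma>\<in>UNIV. if \<sigma> (bs ! j) = b
            then plaquette_kernel d F bs xs \<sigma>'' \<sigma> * plaquette_kernel d F bs xs \<sigma> \<sigma>0 else 0)
     = complex_of_real ((d b)\<^sup>2 / (totalD d)\<^sup>2) * plaquette_kernel d F bs xs \<sigma>'' \<sigma>0"
proof -
  define D2 where "D2 = complex_of_real ((totalD d)\<^sup>2)"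
  define K where "K s \<sigma>' \<sigma> = loop_kernel F bs xs s \<sigma>' \<sigma>" for s \<sigma>' \<sigma>
  have kernel: "plaquette_kernel d F bs xs \<sigma>' \<sigma> = (\<Sum>s\<in>UNIV. cd s / D2 * K s \<sigma>' \<sigma>)" for \<sigma>' \<sigma>
    by (simp add: plaquette_kernel_def D2_def K_def)
  have "(\<Sum>\<sigma>\<in>UNIV. if \<sigma> (bs ! j) = b
        then plaquette_kernel d F bs xs \<sigma>'' \<sigma> * plaquette_kernel d F bs xs \<sigma> \<sigma>0 else 0)
      = (\<Sum>\<sigma>\<in>UNIV. \<Sum>s\<in>UNIV. \<Sum>t\<in>UNIV. cd s * cd t / (D2 * D2) *
          (if \<sigma> (bs ! j) = b then K s \<sigma>'' \<sigma> * K t \<sigma> \<sigma>0 else 0))"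
    unfolding kernel sum_product by (intro sum.cong refl) (simp add: mult_ac)
  also have "\<dots> = (\<Sum>s\<in>UNIV. \<Sum>\<sigma>\<in>UNIV. \<Sum>t\<in>UNIV. cd s * cd t / (D2 * D2) *
          (if \<sigma> (bs ! j) = b then K s \<sigma>'' \<sigma> * K t \<sigma> \<sigma>0 else 0))"
    by (rule sum.swap)
  also have "\<dots> = (\<Sum>s\<in>UNIV. \<Sum>t\<in>UNIV. \<Sum>\<sigma>\<in>UNIV. cd s * cd t / (D2 * D2) *
          (if \<sigma> (bs ! j) = b then K s \<sigma>'' \<sigma> * K t \<sigma> \<sigma>0 else 0))"
    by (rule sum.cong[OF refl], rule sum.swap)
  also have "\<dots> = (\<Sum>s\<in>UNIV. \<Sum>t\<in>UNIV. cd s * cd t *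
          (\<Sum>\<sigma>\<in>UNIV. if \<sigma> (bs ! j) = b then K s \<sigma>'' \<sigma> * K t \<sigma> \<sigma>0 else 0)) / (D2 * D2)"
    by (simp add: sum_divide_distrib sum_distrib_left)
  also have "\<dots> = cd b * cd b * (\<Sum>w\<in>UNIV. cd w * K w \<sigma>'' \<sigma>0) / (D2 * D2)"
    unfolding K_def by (simp only: dim_weighted_loop_kernels[OF bs j])
  also have "\<dots> = complex_of_real ((d b)\<^sup>2 / (totalD d)\<^sup>2) * plaquette_kernel d F bs xs \<sigma>'' \<sigma>0"
    by (simp add: kernel D2_def sum_divide_distrib sum_distrib_left power2_eq_square mult_ac)
  finally show ?thesis .
qed

lemma B_p_edge_diagonal_B_p:
  fixes bs xs :: "'e::finite list"
  assumes bs: "distinct bs" "length xs = length bs" "set xs \<inter> set bs = {}" and e: "e \<in> set bs"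
  shows "B_p d F bs xs (\<lambda>\<sigma>. g (\<sigma> e) * B_p d F bs xs \<psi> \<sigma>)
    = (\<lambda>\<sigma>. (\<Sum>b\<in>UNIV. g b * complex_of_real ((d b)\<^sup>2 / (totalD d)\<^sup>2)) * B_p d F bs xs \<psi> \<sigma>)"
proof
  fix \<sigma>''
  obtain j where j: "j < length bs" and e: "e = bs ! j"
    using e by (auto simp: in_set_conv_nth)
  let ?P = "plaquette_kernel d F bs xs"
  have "B_p d F bs xs (\<lambda>\<sigma>. g (\<sigma> e) * B_p d F bs xs \<psi> \<sigma>) \<sigma>''
      = (\<Sum>\<sigma>\<in>UNIV. ?P \<sigma>'' \<sigma> * (g (\<sigma> (bs ! j)) * (\<Sum>\<sigma>0\<in>UNIV. ?P \<sigma> \<sigma>0 * \<psi> \<sigma>0)))"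
    by (simp add: B_p_eq_plaquette_kernel e)
  also have "\<dots> = (\<Sum>\<sigma>0\<in>UNIV. (\<Sum>b\<in>UNIV. g b *
      (\<Sum>\<sigma>\<in>UNIV. if \<sigma> (bs ! j) = b then ?P \<sigma>'' \<sigma> * ?P \<sigma> \<sigma>0 else 0)) * \<psi> \<sigma>0)"
    by (rule sum_kernel_composition_by_label)
  also have "\<dots> = (\<Sum>b\<in>UNIV. g b * complex_of_real ((d b)\<^sup>2 / (totalD d)\<^sup>2)) *
      (\<Sum>\<sigma>0\<in>UNIV. ?P \<sigma>'' \<sigma>0 * \<psi> \<sigma>0)"
    by (simp only: plaquette_kernel_edge_projection[OF bs j] sum_distrib_left sum_distrib_right mult.assoc)
  finally show "B_p d F bs xs (\<lambda>\<sigma>. g (\<sigma> e) * B_p d F bs xs \<psi> \<sigma>) \<sigma>''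
      = (\<Sum>b\<in>UNIV. g b * complex_of_real ((d b)\<^sup>2 / (totalD d)\<^sup>2)) * B_p d F bs xs \<psi> \<sigma>''"
    by (simp add: B_p_eq_plaquette_kernel)
qed

end

text \<open>Since S_{1b} = d_b / D is real, the weight of S_{ab} / S_{1b} is S_{ab} S_{1b}*, so the
  sum is an off-diagonal entry of S S^\<dagger>.\<close>

lemma S_matrix_ratio_weighted_sum:
  assumes S: "S_matrix one d S" and "a \<noteq> one"
  shows "(\<Sum>b\<in>UNIV. S a b / S one b * complex_of_real ((d b)\<^sup>2 / (totalD d)\<^sup>2)) = 0"
proof -
  have S_one: "S one b = complex_of_real (d b / totalD d)" for b
    using S unfolding S_matrix_def by blast
  have "S a b / S one b * complex_of_real ((d b)\<^sup>2 / (totalD d)\<^sup>2) = S a b * cnj (S one b)" for b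
    by (cases "d b = 0") (simp_all add: S_one power2_eq_square field_simps)
  moreover have "(\<Sum>b\<in>UNIV. S a b * cnj (S one b)) = 0"
    using S \<open>a \<noteq> one\<close> unfolding S_matrix_def by (metis (full_types))
  ultimately show ?thesis
    by simp
qed

theorem lemma11:
  fixes one :: "'l::finite"
    and N :: "'l \<Rightarrow> 'l \<Rightarrow> 'l \<Rightarrow> bool"
    and d :: "'l \<Rightarrow> real"
    and F :: "'l \<Rightarrow> 'l \<Rightarrow> 'l \<Rightarrow> 'l \<Rightarrow> 'l \<Rightarrow> 'l \<Rightarrow> complex"
    and S :: "'l \<Rightarrow> 'l \<Rightarrow> complex"
    and inc :: "'v::finite \<Rightarrow> 'e::finite set"
    and bs xs :: "'e list" and vs :: "'v list"
    and a :: 'l and e :: 'e and \<psi> :: "('e, 'l) state"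
  assumes "fusion_category one N d F"
    and "S_matrix one d S"
    and "trivalent_lattice inc"
    and "is_plaquette inc bs xs vs"
    and "e \<in> set bs"
    and "a \<noteq> one"
    and "\<psi> \<in> H_valid N inc"
    and "B_p d F bs xs \<psi> = \<psi>"
  shows "B_p d F bs xs (O_op S one a e \<psi>) = (\<lambda>\<sigma>. 0)"
proof -
  interpret fusion_cat one N d F
    by (rule fusion_cat.intro) (fact assms(1))
  have bs: "distinct bs" "length xs = length bs" "set xs \<inter> set bs = {}"
    using assms(4) by (auto simp: is_plaquette_def)
  have "O_op S one a e \<psi> = (\<lambda>\<sigma>. S a (\<sigma> e) / S one (\<sigma> e) * B_p d F bs xs \<psi> \<sigma>)"
    using assms(8) by (simp add: O_op_def)
  then have "B_p d F bs xs (O_op S one a e \<psi>)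
      = (\<lambda>\<sigma>. (\<Sum>b\<in>UNIV. S a b / S one b * complex_of_real ((d b)\<^sup>2 / (totalD d)\<^sup>2)) * B_p d F bs xs \<psi> \<sigma>)"
    by (simp only: B_p_edge_diagonal_B_p[OF bs assms(5), where g = "\<lambda>b. S a b / S one b"])
  then show ?thesis
    by (simp only: S_matrix_ratio_weighted_sum[OF assms(2,6)] mult_zero_left)
qed

end
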